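(* Let $B$ be a (3,3)-SAT instance with variables $x_1,\dots,x_n$ and clauses $C_1,\dots,C_m$, and let $(G,Z,\mathrm{col},\bar\alpha,\bar\beta,t)$ be the Fair Colorful Weighted Perfect Matching instance constructed from $B$ as described in the context. If $B$ is satisfiable, then $G$ has a perfect matching of total weight at least $t=3n+m$ in which, for every color, exactly one vertex of that color is matched to a vertex of $Z$.
   Context: (3,3)-SAT: a CNF formula $B=C_1\wedge\dots\wedge C_m$ over variables $x_1,\dots,x_n$, where each clause contains at most three literals and each variable occurs in at most three clauses in total; the question is whether $B$ is satisfiable. Construction: for each variable $x_i$ add to $V$ the six vertices $(x_i^T,r),(x_i^F,r)$ for $r\in\{1,2,3\}$ and to $W$ the three vertices $(x_i,a),(x_i,b),(x_i,c)$, all three placed in $Z$ (so $|Z|=3n$); introduce three new colors $c_{i,1},c_{i,2},c_{i,3}$ with $\mathrm{col}((x_i^T,r))=\mathrm{col}((x_i^F,r))=c_{i,r}$. Give weight $1$ to the edges $(x_i,a)$–$(x_i^T,1)$, $(x_i,a)$–$(x_i^F,3)$, $(x_i,b)$–$(x_i^T,2)$, $(x_i,b)$–$(x_i^F,1)$, $(x_i,c)$–$(x_i^T,3)$, $(x_i,c)$–$(x_i^F,2)$. For each clause $C_j$ add a vertex $C_j$ to $W$; fixing an ordering of the clauses, for each literal of $x_i$ in $C_j$ that is the $r$-th occurrence of $x_i$ in $B$, add a weight-$1$ edge $(x_i^T,r)$–$C_j$ if the literal is $x_i$ and $(x_i^F,r)$–$C_j$ if it is $\neg x_i$. Add dummy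 vertices to $W$ until $|W|=|V|=6n$; all remaining pairs in $V\times W$ get weight-$0$ edges, making $G$ complete bipartite. Set $t=3n+m$ and $\alpha_c=\beta_c=1/(3n)$ for every color $c$ (so exactly one vertex of each color must be matched into $Z$). *)

theory Defs
  imports Main
begin

text \<open>Variables are x_0,...,x_{n-1} (0-indexed), a literal is a pair
  (variable index, polarity) with polarity True for x_i and False for the negation of x_i,
  a clause is a list of distinct literals, and a formula is the list of its clauses
  C_0,...,C_{m-1} (the list order is the fixed clause ordering).\<close>

type_synonym lit = "nat \<times> bool"
type_synonym clause = "lit list"
type_synonym cnf = "clause list"

definition occs :: "cnf \<Rightarrow> nat \<Rightarrow> (nat \<times> bool) list" where
  "occs B i = concat (map (\<lambda>j. map (\<lambda>l. (j, snd l)) (filter (\<lambda>l. fst l = i) (B ! j)))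
                           [0..<length B])"

definition sat33 :: "nat \<Rightarrow> cnf \<Rightarrow> bool" where
  "sat33 n B \<longleftrightarrow>
     (\<forall>C\<in>set B. distinct C \<and> length C \<le> 3 \<and> (\<forall>l\<in>set C. fst l < n)) \<and>
     (\<forall>i<n. length (occs B i) \<le> 3)"

definition satisfiable :: "cnf \<Rightarrow> bool" where
  "satisfiable B \<longleftrightarrow> (\<exists>\<sigma> :: nat \<Rightarrow> bool. \<forall>C\<in>set B. \<exists>l\<in>set C. \<sigma> (fst l) = snd l)"

text \<open>Vertices of the constructed bipartite graph. VT i r = (x_i^T, r), VF i r = (x_i^F, r)
  with r \<in> {1,2,3}; WA/WB/WC i = (x_i,a),(x_i,b),(x_i,c); WCl j = clause vertex C_j;
  WD k = dummy vertices.\<close>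

datatype vtx = VT nat nat | VF nat nat
datatype wtx = WA nat | WB nat | WC nat | WCl nat | WD nat

definition Vs :: "nat \<Rightarrow> vtx set" where
  "Vs n = {VT i r | i r. i < n \<and> r \<in> {1,2,3}} \<union> {VF i r | i r. i < n \<and> r \<in> {1,2,3}}"

text \<open>Dummies fill W up to |W| = |V| = 6n; there are 6n - (3n + m) of them.\<close>
definition Ws :: "nat \<Rightarrow> cnf \<Rightarrow> wtx set" where
  "Ws n B = {WA i | i. i < n} \<union> {WB i | i. i < n} \<union> {WC i | i. i < n}
            \<union> {WCl j | j. j < length B} \<union> {WD k | k. k < 6 * n - (3 * n + length B)}"

definition Zs :: "nat \<Rightarrow> wtx set" where
  "Zs n = {WA i | i. i < n} \<union> {WB i | i. i < n} \<union> {WC i | i. i < n}"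

text \<open>Colour of a vertex of V: c_{i,r} is represented by the pair (i,r).\<close>
fun col :: "vtx \<Rightarrow> nat \<times> nat" where
  "col (VT i r) = (i, r)"
| "col (VF i r) = (i, r)"

text \<open>Edge weights of the complete bipartite graph (1 for the listed edges, 0 otherwise).
  The r-th occurrence of x_i is occs B i ! (r-1).\<close>
fun weight :: "cnf \<Rightarrow> vtx \<Rightarrow> wtx \<Rightarrow> nat" where
  "weight B (VT i r) (WA i') = (if i' = i \<and> r = 1 then 1 else 0)"
| "weight B (VF i r) (WA i') = (if i' = i \<and> r = 3 then 1 else 0)"
| "weight B (VT i r) (WB i') = (if i' = i \<and> r = 2 then 1 else 0)"
| "weight B (VF i r) (WB i') = (if i' = i \<and> r = 1 then 1 else 0)"
| "weight B (VT i r) (WC i') = (if i' = i \<and> r = 3 then 1 else 0)"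
| "weight B (VF i r) (WC i') = (if i' = i \<and> r = 2 then 1 else 0)"
| "weight B (VT i r) (WCl j) =
     (if 1 \<le> r \<and> r \<le> length (occs B i) \<and> occs B i ! (r - 1) = (j, True) then 1 else 0)"
| "weight B (VF i r) (WCl j) =
     (if 1 \<le> r \<and> r \<le> length (occs B i) \<and> occs B i ! (r - 1) = (j, False) then 1 else 0)"
| "weight B v (WD k) = 0"

text \<open>A perfect matching of the complete bipartite graph on VV \<union> WW (every pair is an edge).\<close>
definition perfect_matching :: "'v set \<Rightarrow> 'w set \<Rightarrow> ('v \<times> 'w) set \<Rightarrow> bool" where
  "perfect_matching VV WW M \<longleftrightarrow> M \<subseteq> VV \<times> WW \<and>
     (\<forall>v\<in>VV. \<exists>!w. (v, w) \<in> M) \<and> (\<forall>w\<in>WW. \<exists>!v. (v, w) \<in> M)"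

definition match_weight :: "cnf \<Rightarrow> (vtx \<times> wtx) set \<Rightarrow> nat" where
  "match_weight B M = (\<Sum>(v, w)\<in>M. weight B v w)"

text \<open>Fairness with alpha_c = beta_c = 1/(3n): for every colour c_{i,r}, exactly one vertex
  of that colour is matched to a vertex of Z.\<close>
definition fair :: "nat \<Rightarrow> (vtx \<times> wtx) set \<Rightarrow> bool" where
  "fair n M \<longleftrightarrow> (\<forall>i<n. \<forall>r\<in>{1,2,3::nat}.
     card {v\<in>Vs n. col v = (i, r) \<and> (\<exists>w\<in>Zs n. (v, w) \<in> M)} = 1)"

end

theory Submission
  imports Defs
begin

text \<open>Fix a satisfying assignment \<sigma>. The copies of the literal that \<sigma> falsifies,
  (x_i^F, r) if \<sigma>(x_i) holds and (x_i^T, r) otherwise, are matched along their weight-1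
  gadget edges onto (x_i,a), (x_i,b), (x_i,c); these are then exactly the vertices matched
  into Z, one for each colour c_{i,r}. Every clause C_j contains a true literal; if it is the
  r-th occurrence of x_i, the corresponding copy of the satisfied literal has a weight-1 edge
  to C_j, and distinct clauses receive distinct copies because an occurrence lies in only one
  clause. The remaining satisfied copies are matched to the dummies in any way, for a total
  weight of at least 3n + m.\<close>

fun falsified :: "(nat \<Rightarrow> bool) \<Rightarrow> vtx \<Rightarrow> bool" where
  "falsified \<sigma> (VT i r) \<longleftrightarrow> \<not> \<sigma> i"
| "falsified \<sigma> (VF i r) \<longleftrightarrow> \<sigma> i"

fun gadget_partner :: "vtx \<Rightarrow> wtx" where
  "gadget_partner (VT i r) = (if r = 1 then WA i else if r = 2 then WB i else WC i)"
| "gadget_partner (VF i r) = (if r = 3 then WA i else if r = 1 then WB i else WC i)"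

lemma perfect_matching_pairs:
  assumes "inj_on g A" and "inj_on h A"
  shows "perfect_matching (g ` A) (h ` A) ((\<lambda>a. (g a, h a)) ` A)"
  unfolding perfect_matching_def
  by (auto simp: inj_on_eq_iff[OF assms(1)] inj_on_eq_iff[OF assms(2)])

lemma perfect_matching_Un:
  assumes M1: "perfect_matching V1 W1 M1" and M2: "perfect_matching V2 W2 M2"
    and disj: "V1 \<inter> V2 = {}" "W1 \<inter> W2 = {}"
  shows "perfect_matching (V1 \<union> V2) (W1 \<union> W2) (M1 \<union> M2)"
proof -
  have sub: "M1 \<subseteq> V1 \<times> W1" "M2 \<subseteq> V2 \<times> W2"
    using M1 M2 unfolding perfect_matching_def by auto
  have "\<exists>!w. (v, w) \<in> M1 \<union> M2" if "v \<in> V1 \<union> V2" for v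
  proof -
    let ?M = "if v \<in> V1 then M1 else M2"
    have "\<exists>!w. (v, w) \<in> ?M"
      using M1 M2 that unfolding perfect_matching_def by (cases "v \<in> V1") simp_all
    moreover have "(v, w) \<in> M1 \<union> M2 \<longleftrightarrow> (v, w) \<in> ?M" for w
      using sub disj(1) by auto
    ultimately show ?thesis
      by simp
  qed
  moreover have "\<exists>!v. (v, w) \<in> M1 \<union> M2" if "w \<in> W1 \<union> W2" for w
  proof -
    let ?M = "if w \<in> W1 then M1 else M2"
    have "\<exists>!v. (v, w) \<in> ?M"
      using M1 M2 that unfolding perfect_matching_def by (cases "w \<in> W1") simp_all
    moreover have "(v, w) \<in> M1 \<union> M2 \<longleftrightarrow> (v, w) \<in> ?M" for v
      using sub disj(2) by auto
    ultimately show ?thesis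
      by simp
  qed
  moreover have "M1 \<union> M2 \<subseteq> (V1 \<union> V2) \<times> (W1 \<union> W2)"
    using sub by blast
  ultimately show ?thesis
    unfolding perfect_matching_def by simp
qed

lemma match_weight_pairs_eq_card:
  assumes "inj_on g A" and "\<And>a. a \<in> A \<Longrightarrow> weight B (g a) (h a) = 1"
  shows "match_weight B ((\<lambda>a. (g a, h a)) ` A) = card A"
proof -
  have "match_weight B ((\<lambda>a. (g a, h a)) ` A) = (\<Sum>a\<in>A. weight B (g a) (h a))"
    unfolding match_weight_def using assms(1) by (subst sum.reindex) (auto simp: inj_on_def)
  also have "\<dots> = card A"
    using assms(2) by simp
  finally show ?thesis .
qed

lemma match_weight_mono:
  assumes "finite M'" and "M \<subseteq> M'"
  shows "match_weight B M \<le> match_weight B M'"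
  unfolding match_weight_def using assms by (rule sum_mono2) simp

lemma finite_Vs: "finite (Vs n)"
proof -
  have "Vs n = (\<lambda>(i, r). VT i r) ` ({..<n} \<times> {1,2,3})
      \<union> (\<lambda>(i, r). VF i r) ` ({..<n} \<times> {1,2,3})"
    unfolding Vs_def by auto
  then show ?thesis
    by simp
qed

lemma card_Zs: "card (Zs n) = 3 * n"
proof -
  have Zs_eq: "Zs n = (WA ` {..<n} \<union> WB ` {..<n}) \<union> WC ` {..<n}"
    unfolding Zs_def by auto
  have "card (Zs n) = card (WA ` {..<n} \<union> WB ` {..<n}) + card (WC ` {..<n})"
    unfolding Zs_eq by (rule card_Un_disjoint) auto
  also have "\<dots> = 3 * n"
    by (subst card_Un_disjoint) (auto simp: card_image inj_on_def)
  finally show ?thesis .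
qed

lemma Ws_eq:
  "Ws n B = Zs n \<union> WCl ` {..<length B} \<union> WD ` {..<6 * n - (3 * n + length B)}"
  unfolding Ws_def Zs_def by auto

lemma weight_gadget_partner: "v \<in> Vs n \<Longrightarrow> weight B v (gadget_partner v) = 1"
  unfolding Vs_def by auto

lemma bij_betw_gadget_partner: "bij_betw gadget_partner {v \<in> Vs n. falsified \<sigma> v} (Zs n)"
proof (rule bij_betw_imageI)
  show "inj_on gadget_partner {v \<in> Vs n. falsified \<sigma> v}"
    unfolding inj_on_def Vs_def by (auto split: if_splits)
  show "gadget_partner ` {v \<in> Vs n. falsified \<sigma> v} = Zs n"
  proof (intro equalityI subsetI)
    fix w assume "w \<in> Zs n"
    then obtain i where i: "i < n" and w: "w \<in> {WA i, WB i, WC i}"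
      unfolding Zs_def by auto
    let ?u = "\<lambda>r. if \<sigma> i then VF i r else VT i r"
    have "?u r \<in> {v \<in> Vs n. falsified \<sigma> v}" if "r \<in> {1,2,3}" for r
      using i that unfolding Vs_def by auto
    moreover have "w \<in> gadget_partner ` ?u ` {1,2,3}"
      using w by auto
    ultimately show "w \<in> gadget_partner ` {v \<in> Vs n. falsified \<sigma> v}"
      by blast
  qed (auto simp: Vs_def Zs_def)
qed

lemma card_falsified: "card {v \<in> Vs n. falsified \<sigma> v} = 3 * n"
  using bij_betw_same_card[OF bij_betw_gadget_partner] card_Zs by metis

lemma card_not_falsified: "card {v \<in> Vs n. \<not> falsified \<sigma> v} = 3 * n"
proof -
  have "\<not> falsified \<sigma> v \<longleftrightarrow> falsified (\<lambda>i. \<not> \<sigma> i) v" for v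
    by (cases v) simp_all
  then show ?thesis
    using card_falsified[of n "\<lambda>i. \<not> \<sigma> i"] by simp
qed

lemma falsified_colour_class:
  assumes "i < n" and "r \<in> {1,2,3}"
  shows "{v \<in> Vs n. col v = (i, r) \<and> falsified \<sigma> v} = {if \<sigma> i then VF i r else VT i r}"
  using assms unfolding Vs_def by (auto elim: col.elims)

lemma fair_if_matched_into_Zs_iff_falsified:
  assumes "perfect_matching (Vs n) W M"
    and "\<And>v w. (v, w) \<in> M \<Longrightarrow> w \<in> Zs n \<longleftrightarrow> falsified \<sigma> v"
  shows "fair n M"
proof -
  have "(\<exists>w\<in>Zs n. (v, w) \<in> M) \<longleftrightarrow> falsified \<sigma> v" if "v \<in> Vs n" for v
    using assms that unfolding perfect_matching_def by blast
  then show ?thesis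
    unfolding fair_def by (simp add: falsified_colour_class cong: conj_cong)
qed

lemma weight_WCl_eq_1_iff:
  "weight B v (WCl j) = 1 \<longleftrightarrow>
     (\<exists>i r p. v = (if p then VT i r else VF i r) \<and> 1 \<le> r \<and> r \<le> length (occs B i)
        \<and> occs B i ! (r - 1) = (j, p))"
  by (cases v) auto

lemma weight_WCl_unique:
  assumes "weight B v (WCl j) = 1" and "weight B v (WCl j') = 1"
  shows "j = j'"
  using assms unfolding weight_WCl_eq_1_iff by (auto split: if_splits)

lemma occs_memI: "j < length B \<Longrightarrow> (i, p) \<in> set (B ! j) \<Longrightarrow> (j, p) \<in> set (occs B i)"
  unfolding occs_def by (auto intro!: bexI[where x=j] image_eqI[where x="(i, p)"])

lemma satisfied_clause_vertex:
  assumes "sat33 n B" and "\<forall>C\<in>set B. \<exists>l\<in>set C. \<sigma> (fst l) = snd l" and "j < length B"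
  shows "\<exists>v\<in>Vs n. \<not> falsified \<sigma> v \<and> weight B v (WCl j) = 1"
proof -
  obtain i p where l: "(i, p) \<in> set (B ! j)" and true: "\<sigma> i = p"
    using assms(2,3) by fastforce
  then have i: "i < n"
    using assms(1,3) unfolding sat33_def by fastforce
  obtain k where k: "k < length (occs B i)" "occs B i ! k = (j, p)"
    using occs_memI[OF assms(3) l] by (auto simp: in_set_conv_nth)
  have "k < 3"
    using k(1) assms(1) i unfolding sat33_def by fastforce
  define v where "v = (if p then VT i (Suc k) else VF i (Suc k))"
  have "v \<in> Vs n"
    using i \<open>k < 3\<close> unfolding v_def Vs_def by auto
  moreover have "\<not> falsified \<sigma> v \<and> weight B v (WCl j) = 1"
    using true k unfolding v_def by auto
  ultimately show ?thesis by blast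
qed

locale clause_vertex_choice =
  fixes n :: nat and B :: cnf and \<sigma> :: "nat \<Rightarrow> bool" and c :: "nat \<Rightarrow> vtx"
  assumes c_inj: "inj_on c {..<length B}"
    and c_Vs: "\<And>j. j < length B \<Longrightarrow> c j \<in> Vs n"
    and c_not_falsified: "\<And>j. j < length B \<Longrightarrow> \<not> falsified \<sigma> (c j)"
    and c_weight: "\<And>j. j < length B \<Longrightarrow> weight B (c j) (WCl j) = 1"
begin

definition leftover :: "vtx set" where
  "leftover = {v \<in> Vs n. \<not> falsified \<sigma> v} - c ` {..<length B}"

lemma finite_leftover: "finite leftover"
  unfolding leftover_def by (simp add: finite_Vs)

lemma card_leftover: "card leftover = 6 * n - (3 * n + length B)"
proof -
  have "c ` {..<length B} \<subseteq> {v \<in> Vs n. \<not> falsified \<sigma> v}"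
    using c_Vs c_not_falsified by auto
  then have "card leftover = 3 * n - length B"
    unfolding leftover_def
    by (simp add: card_Diff_subset card_not_falsified card_image[OF c_inj])
  then show ?thesis
    by simp
qed

lemma ex_bij_leftover_dummies:
  "\<exists>g. bij_betw g leftover (WD ` {..<6 * n - (3 * n + length B)})"
proof -
  have "card (WD ` {..<6 * n - (3 * n + length B)}) = card leftover"
    using card_leftover by (simp add: card_image inj_on_def)
  then show ?thesis
    by (intro finite_same_card_bij) (simp_all add: finite_leftover)
qed

definition matching :: "(vtx \<Rightarrow> wtx) \<Rightarrow> (vtx \<times> wtx) set" where
  "matching g = (\<lambda>v. (v, gadget_partner v)) ` {v \<in> Vs n. falsified \<sigma> v}
     \<union> (\<lambda>j. (c j, WCl j)) ` {..<length B} \<union> (\<lambda>v. (v, g v)) ` leftover"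

lemma perfect_matching_matching:
  assumes g: "bij_betw g leftover (WD ` {..<6 * n - (3 * n + length B)})"
  shows "perfect_matching (Vs n) (Ws n B) (matching g)"
proof -
  define F where "F = {v \<in> Vs n. falsified \<sigma> v}"
  have "perfect_matching F (Zs n) ((\<lambda>v. (v, gadget_partner v)) ` F)"
    using perfect_matching_pairs[of id F gadget_partner] bij_betw_gadget_partner[of n \<sigma>]
    unfolding bij_betw_def F_def by simp
  moreover have "perfect_matching (c ` {..<length B}) (WCl ` {..<length B})
      ((\<lambda>j. (c j, WCl j)) ` {..<length B})"
    using perfect_matching_pairs[OF c_inj, of WCl] by (simp add: inj_on_def)
  moreover have "perfect_matching leftover (WD ` {..<6 * n - (3 * n + length B)})
      ((\<lambda>v. (v, g v)) ` leftover)"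
    using perfect_matching_pairs[of id leftover g] g unfolding bij_betw_def by simp
  ultimately have "perfect_matching (F \<union> c ` {..<length B} \<union> leftover) (Ws n B) (matching g)"
    unfolding matching_def Ws_eq F_def[symmetric] using c_not_falsified
    by (intro perfect_matching_Un) (auto simp: F_def leftover_def Zs_def)
  moreover have "F \<union> c ` {..<length B} \<union> leftover = Vs n"
    using c_Vs unfolding F_def leftover_def by auto
  ultimately show ?thesis
    by simp
qed

lemma match_weight_matching: "3 * n + length B \<le> match_weight B (matching g)"
proof -
  let ?MF = "(\<lambda>v. (v, gadget_partner v)) ` {v \<in> Vs n. falsified \<sigma> v}"
  let ?MC = "(\<lambda>j. (c j, WCl j)) ` {..<length B}"
  have "match_weight B ?MF = 3 * n"
    using card_falsified[of n \<sigma>]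
    by (subst match_weight_pairs_eq_card) (simp_all add: weight_gadget_partner[of _ n])
  moreover have "match_weight B ?MC = length B"
    using match_weight_pairs_eq_card[OF c_inj] c_weight by simp
  ultimately have "3 * n + length B = match_weight B ?MF + match_weight B ?MC"
    by simp
  also have "\<dots> = match_weight B (?MF \<union> ?MC)"
    unfolding match_weight_def
    by (rule sum.union_disjoint[symmetric]) (use c_not_falsified in \<open>auto simp: finite_Vs\<close>)
  also have "\<dots> \<le> match_weight B (matching g)"
    unfolding matching_def using finite_leftover
    by (intro match_weight_mono) (auto simp: finite_Vs)
  finally show ?thesis .
qed

lemma fair_matching:
  assumes g: "bij_betw g leftover (WD ` {..<6 * n - (3 * n + length B)})"
  shows "fair n (matching g)"
proof (rule fair_if_matched_into_Zs_iff_falsified[OF perfect_matching_matching[OF g]])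
  fix v w assume "(v, w) \<in> matching g"
  then consider "v \<in> Vs n" "falsified \<sigma> v" "w = gadget_partner v"
    | j where "j < length B" "v = c j" "w = WCl j"
    | "v \<in> leftover" "w = g v"
    unfolding matching_def by blast
  then show "w \<in> Zs n \<longleftrightarrow> falsified \<sigma> v"
  proof cases
    case 1
    then show ?thesis
      using bij_betw_apply[OF bij_betw_gadget_partner] by blast
  next
    case 2
    then show ?thesis
      using c_not_falsified unfolding Zs_def by blast
  next
    case 3
    then show ?thesis
      using bij_betw_apply[OF g] unfolding leftover_def Zs_def by force
  qed
qed

end

lemma ex_clause_vertex_choice:
  assumes "sat33 n B" and "\<forall>C\<in>set B. \<exists>l\<in>set C. \<sigma> (fst l) = snd l"
  shows "\<exists>c. clause_vertex_choice n B \<sigma> c"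
proof -
  define c where "c j = (SOME v. v \<in> Vs n \<and> \<not> falsified \<sigma> v \<and> weight B v (WCl j) = 1)" for j
  have c: "c j \<in> Vs n \<and> \<not> falsified \<sigma> (c j) \<and> weight B (c j) (WCl j) = 1" if "j < length B" for j
    using someI_ex[OF satisfied_clause_vertex[OF assms that, unfolded Bex_def]]
    unfolding c_def by blast
  have "inj_on c {..<length B}"
    using c weight_WCl_unique by (metis inj_onI lessThan_iff)
  then have "clause_vertex_choice n B \<sigma> c"
    using c by unfold_locales blast+
  then show ?thesis
    by blast
qed

theorem lemmaD4:
  fixes n :: nat and B :: cnf
  assumes "sat33 n B" and "satisfiable B"
  shows "\<exists>M. perfect_matching (Vs n) (Ws n B) M \<and> match_weight B M \<ge> 3 * n + length B
             \<and> fair n M"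
proof -
  obtain \<sigma> where \<sigma>: "\<forall>C\<in>set B. \<exists>l\<in>set C. \<sigma> (fst l) = snd l"
    using assms(2) unfolding satisfiable_def by blast
  then obtain c where "clause_vertex_choice n B \<sigma> c"
    using ex_clause_vertex_choice assms(1) by blast
  then interpret clause_vertex_choice n B \<sigma> c .
  obtain g where "bij_betw g leftover (WD ` {..<6 * n - (3 * n + length B)})"
    using ex_bij_leftover_dummies by blast
  then show ?thesis
    using perfect_matching_matching match_weight_matching fair_matching by blast
qed

end
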